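(* Let $\xi$ be a pure-like mixture (as defined in the context, in particular not of the form $x^p$). Then for sufficiently small $\varepsilon>0$ there exists a constant $\alpha>0$ such that $$F(x,y)<0\quad\text{for all }x\in(-E_0-\varepsilon,-E_0+\varepsilon),\ y\in\mathbb R\setminus(-y_0-\alpha\sqrt\varepsilon,-y_0+\alpha\sqrt\varepsilon),$$ and there exists a constant $\beta>0$ such that $$F(x,y)<\beta\sqrt\varepsilon\quad\text{for all }x\in(-E_0-\varepsilon,-E_0+\varepsilon),\ y\in(-y_0-\alpha\sqrt\varepsilon,-y_0+\alpha\sqrt\varepsilon).$$
   Context: $\xi(x)=\sum_{p\ge2}\gamma_p^2x^p$ with deterministic $\gamma_p$, $\sum_{p\ge2}2^p\gamma_p^2<\infty$ and $\xi(1)=1$; write $\xi'=\xi'(1)$, $\xi''=\xi''(1)$. $\xi$ is called pure-like if $G:=\log\frac{\xi''}{\xi'}-\frac{(\xi''-\xi')(\xi''-\xi'+\xi'^2)}{\xi''\xi'^2}>0$; here it is also assumed that $\xi$ is a genuine mixture (not $x^p$), so that $\xi''+\xi'-\xi'^2>0$. Let $\sigma_{\mathrm{sc}}$ be the standard semicircle law (density $\frac1{2\pi}\sqrt{4-t^2}$ on $[-2,2]$) and $\Psi_*(x)=\int\log|x-t|\,\sigma_{\mathrm{sc}}(dt)$, i.e. $\Psi_*(x)=\frac{x^2}4-\frac12$ for $|x|\le2$ and $\Psi_*(x)=\frac{x^2}4-\frac12-\big[\frac{|x|}4\sqrt{x^2-4}-\log(\sqrt{x^2/4-1}+|x|/2)\big]$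 for $|x|>2$. Define $$F(x,y)=\tfrac12+\tfrac12\log\tfrac{\xi''}{\xi'}-\tfrac{x^2}2-\frac{(y-\xi'x)^2}{2(\xi''+\xi'-\xi'^2)}+\Psi_*\Big(\frac{y}{\sqrt{\xi''}}\Big).$$ Let $-E_0=\min\{x:\sup_{y\in\mathbb R}F(x,y)=0\}$ and let $-y_0$ be the maximizer of $y\mapsto F(-E_0,y)$ (which for pure-like $\xi$ is unique and satisfies $-y_0<-2\sqrt{\xi''}$). *)

theory Defs
  imports "HOL-Analysis.Analysis"
begin

definition xi :: "(nat \<Rightarrow> real) \<Rightarrow> real \<Rightarrow> real" where
  "xi \<gamma> x = (\<Sum>p. (if 2 \<le> p then (\<gamma> p)\<^sup>2 * x ^ p else 0))"

definition xi1 :: "(nat \<Rightarrow> real) \<Rightarrow> real" where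
  "xi1 \<gamma> = deriv (xi \<gamma>) 1"

definition xi2 :: "(nat \<Rightarrow> real) \<Rightarrow> real" where
  "xi2 \<gamma> = deriv (deriv (xi \<gamma>)) 1"

definition pure_like :: "(nat \<Rightarrow> real) \<Rightarrow> bool" where
  "pure_like \<gamma> \<longleftrightarrow>
     ln (xi2 \<gamma> / xi1 \<gamma>)
     - (xi2 \<gamma> - xi1 \<gamma>) * (xi2 \<gamma> - xi1 \<gamma> + (xi1 \<gamma>)\<^sup>2)
       / (xi2 \<gamma> * (xi1 \<gamma>)\<^sup>2) > 0"

text \<open>Psi_*(x) = integral of log|x-t| against the semicircle law, explicit form.\<close>
definition Psi_star :: "real \<Rightarrow> real" where
  "Psi_star x = (if \<bar>x\<bar> \<le> 2 then x\<^sup>2 / 4 - 1/2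
     else x\<^sup>2 / 4 - 1/2 - (\<bar>x\<bar> / 4 * sqrt (x\<^sup>2 - 4)
                               - ln (sqrt (x\<^sup>2 / 4 - 1) + \<bar>x\<bar> / 2)))"

definition Fxi :: "(nat \<Rightarrow> real) \<Rightarrow> real \<Rightarrow> real \<Rightarrow> real" where
  "Fxi \<gamma> x y = 1/2 + 1/2 * ln (xi2 \<gamma> / xi1 \<gamma>) - x\<^sup>2 / 2
     - (y - xi1 \<gamma> * x)\<^sup>2 / (2 * (xi2 \<gamma> + xi1 \<gamma> - (xi1 \<gamma>)\<^sup>2))
     + Psi_star (y / sqrt (xi2 \<gamma>))"

definition mE0 :: "(nat \<Rightarrow> real) \<Rightarrow> real" where
  "mE0 \<gamma> = (LEAST x. (SUP y. Fxi \<gamma> x y) = 0)"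

text \<open>my0 = -y_0 = the (unique) maximizer of y \<mapsto> F(-E_0, y).\<close>
definition my0 :: "(nat \<Rightarrow> real) \<Rightarrow> real" where
  "my0 \<gamma> = (THE y. \<forall>z. Fxi \<gamma> (mE0 \<gamma>) z \<le> Fxi \<gamma> (mE0 \<gamma>) y)"

end

theory Submission
  imports Defs
begin

(* Write a = xi', b = xi'' and c = b + a - a^2; c is the variance of p under the probability
   weights gamma_p^2, positive because xi is a genuine mixture. Then
     F(x, y) = ln (b / a) / 2 + Q(x, y) - psi_corr (y / sqrt b)
   with a quadratic form Q satisfying Q(x, y) <= - k y^2, k = (b - a) / (4 b (a + b)) > 0, and
   psi_corr = t^2/4 - 1/2 - Psi_* convex. So F lies below each of its tangent planes by at least
   k (y - y0)^2. Along the ridge where dF/dy = 0, F equals ln (b / a) / 2 > 0 at the origin and is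
   negative far out; at a zero (x0, y0) on the ridge this gives
     F(x, y) <= g (x - x0) - k (y - y0)^2   with g > 0.
   Such a cap forces -E_0 = x0 and -y_0 = y0, and yields both estimates with alpha = sqrt ((g + 1) / k)
   and beta = g + 1. *)

lemma powser_deriv_sums_at_1:
  fixes c :: "nat \<Rightarrow> real"
  assumes summable: "summable (\<lambda>n. c n * R ^ n)" and R: "1 < R"
  defines "f \<equiv> \<lambda>x. \<Sum>n. c n * x ^ n"
  shows "(\<lambda>n. real n * c n) sums deriv f 1"
    and "(\<lambda>n. (real n - 1) * real n * c n) sums deriv (deriv f) 1"
proof -
  have sc: "summable (\<lambda>n. c n * z ^ n)" if "norm z < R" for z :: real
    using powser_inside[OF summable] that R by simp
  have sd: "summable (\<lambda>n. diffs c n * z ^ n)" if "norm z < R" for z :: real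
    using termdiff_converges[OF that sc] .
  have deriv_f: "deriv f z = (\<Sum>n. diffs c n * z ^ n)" if "norm z < R" for z :: real
    unfolding f_def using termdiffs_strong'[OF sc that] by (rule DERIV_imp_deriv)
  have "eventually (\<lambda>z. z \<in> ball 0 R) (nhds (1::real))"
    using R by (intro eventually_nhds_in_open) auto
  then have "eventually (\<lambda>z. deriv f z = (\<Sum>n. diffs c n * z ^ n)) (nhds 1)"
    by eventually_elim (simp add: deriv_f)
  then have "deriv (deriv f) 1 = deriv (\<lambda>z. \<Sum>n. diffs c n * z ^ n) 1"
    by (rule deriv_cong_ev) simp
  also have "\<dots> = (\<Sum>n. diffs (diffs c) n * 1 ^ n)"
    using termdiffs_strong'[OF sd, where z=1] R by (intro DERIV_imp_deriv) simp
  finally have second: "deriv (deriv f) 1 = (\<Sum>n. diffs (diffs c) n)" by simp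
  have "(\<lambda>n. real n * c n * 1 ^ (n - 1)) sums (\<Sum>n. diffs c n * 1 ^ n)"
    using diffs_equiv[OF sd[of 1]] R by simp
  then show "(\<lambda>n. real n * c n) sums deriv f 1"
    using deriv_f[of 1] R by simp
  have "(\<lambda>n. real n * diffs c n * 1 ^ (n - 1)) sums (\<Sum>n. diffs (diffs c) n * 1 ^ n)"
    using diffs_equiv[of "diffs c" 1] termdiff_converges[OF _ sd, of 1] R by simp
  then have "(\<lambda>n. (real (Suc n) - 1) * real (Suc n) * c (Suc n)) sums deriv (deriv f) 1"
    using second by (simp add: diffs_def algebra_simps)
  then show "(\<lambda>n. (real n - 1) * real n * c n) sums deriv (deriv f) 1"
    using sums_Suc_iff[of "\<lambda>n. (real n - 1) * real n * c n"] by simp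
qed

lemma variance_sums:
  fixes w :: "nat \<Rightarrow> real"
  assumes w: "w sums 1"
    and first: "(\<lambda>p. real p * w p) sums m"
    and second: "(\<lambda>p. (real p)\<^sup>2 * w p) sums s"
  shows "(\<lambda>p. (real p - m)\<^sup>2 * w p) sums (s - m\<^sup>2)"
proof -
  have "(\<lambda>p. (real p)\<^sup>2 * w p - 2 * m * (real p * w p) + m\<^sup>2 * w p) sums (s - 2 * m * m + m\<^sup>2 * 1)"
    by (intro sums_add sums_diff sums_mult second first w)
  then show ?thesis
    by (simp add: power2_eq_square algebra_simps)
qed

lemma point_mass_if_variance_zero:
  fixes w :: "nat \<Rightarrow> real"
  assumes nonneg: "\<And>p. 0 \<le> w p" and w: "w sums 1"
    and variance: "(\<lambda>p. (real p - m)\<^sup>2 * w p) sums 0"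
  shows "\<exists>n. w = (\<lambda>p. if p = n then 1 else 0)"
proof -
  have zero: "(real p - m)\<^sup>2 * w p = 0" for p
    using variance nonneg suminf_eq_zero_iff[OF sums_summable[OF variance]]
    by (simp add: sums_iff)
  have "\<exists>n. w n \<noteq> 0"
  proof (rule ccontr)
    assume "\<not> ?thesis"
    then have "w = (\<lambda>_. 0)" by auto
    with w show False using sums_zero sums_unique2 by fastforce
  qed
  then obtain n where "w n \<noteq> 0" ..
  then have "real n = m" using zero[of n] by simp
  then have others: "w p = 0" if "p \<noteq> n" for p
    using zero[of p] that by simp
  then have "(\<lambda>p. if p = n then w p else 0) = w" by auto
  with sums_single[of n w] w have "w n = 1" using sums_unique2 by metis
  with others show ?thesis by (auto simp: fun_eq_iff)
qed

lemma mono_deriv_imp_above_tangent: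
  fixes f f' :: "real \<Rightarrow> real"
  assumes deriv: "\<And>x. DERIV f x :> f' x" and mono: "mono f'"
  shows "f x + f' x * (y - x) \<le> f y"
proof -
  consider "x < y" | "y < x" | "x = y" by linarith
  then show ?thesis
  proof cases
    case 1
    then obtain z where "x < z" "f y - f x = (y - x) * f' z"
      using MVT2[of x y f f'] deriv by blast
    moreover have "(y - x) * f' x \<le> (y - x) * f' z"
      using 1 \<open>x < z\<close> monoD[OF mono, of x z] by (intro mult_left_mono) auto
    ultimately show ?thesis by (simp add: algebra_simps)
  next
    case 2
    then obtain z where "z < x" "f x - f y = (x - y) * f' z"
      using MVT2[of y x f f'] deriv by blast
    moreover have "(x - y) * f' z \<le> (x - y) * f' x"
      using 2 \<open>z < x\<close> monoD[OF mono, of z x] by (intro mult_left_mono) auto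
    ultimately show ?thesis by (simp add: algebra_simps)
  qed simp
qed

section \<open>Moments of the mixture\<close>

definition xi_coeff :: "(nat \<Rightarrow> real) \<Rightarrow> nat \<Rightarrow> real" where
  "xi_coeff \<gamma> p = (if 2 \<le> p then (\<gamma> p)\<^sup>2 else 0)"

lemma xi_coeff_nonneg: "0 \<le> xi_coeff \<gamma> p"
  by (simp add: xi_coeff_def)

lemma xi_eq_powser: "xi \<gamma> x = (\<Sum>p. xi_coeff \<gamma> p * x ^ p)"
  unfolding xi_def xi_coeff_def by (intro suminf_cong) simp

context
  fixes \<gamma> :: "nat \<Rightarrow> real"
  assumes summ: "summable (\<lambda>p. (if 2 \<le> p then 2 ^ p * (\<gamma> p)\<^sup>2 else 0))"
begin

lemma summable_xi_coeff: "summable (\<lambda>p. xi_coeff \<gamma> p * 2 ^ p)"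
proof -
  have "(\<lambda>p. xi_coeff \<gamma> p * 2 ^ p) = (\<lambda>p. if 2 \<le> p then 2 ^ p * (\<gamma> p)\<^sup>2 else 0)"
    by (simp add: xi_coeff_def fun_eq_iff)
  with summ show ?thesis by simp
qed

lemma xi1_sums: "(\<lambda>p. real p * xi_coeff \<gamma> p) sums xi1 \<gamma>"
  and xi2_sums: "(\<lambda>p. (real p - 1) * real p * xi_coeff \<gamma> p) sums xi2 \<gamma>"
  using powser_deriv_sums_at_1[OF summable_xi_coeff]
  by (simp_all add: xi1_def xi2_def xi_eq_powser[abs_def])

lemma xi_coeff_sums: "xi \<gamma> 1 = 1 \<Longrightarrow> xi_coeff \<gamma> sums 1"
  using powser_inside[OF summable_xi_coeff, of 1]
  by (simp add: xi_eq_powser summable_sums_iff)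

lemma xi1_ge_2:
  assumes "xi \<gamma> 1 = 1"
  shows "2 \<le> xi1 \<gamma>"
proof -
  from assms have "(\<lambda>p. 2 * xi_coeff \<gamma> p) sums (2 * 1)"
    by (intro sums_mult xi_coeff_sums)
  moreover have "2 * xi_coeff \<gamma> p \<le> real p * xi_coeff \<gamma> p" for p
    by (cases "2 \<le> p") (auto simp: xi_coeff_def intro: mult_right_mono)
  ultimately show ?thesis
    using sums_le[OF _ _ xi1_sums] by fastforce
qed

lemma xi1_le_xi2: "xi1 \<gamma> \<le> xi2 \<gamma>"
proof -
  have "real p * xi_coeff \<gamma> p \<le> (real p - 1) * real p * xi_coeff \<gamma> p" for p
  proof (cases "2 \<le> p")
    case True
    then have "1 * (real p * xi_coeff \<gamma> p) \<le> (real p - 1) * (real p * xi_coeff \<gamma> p)"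
      by (intro mult_right_mono) (simp_all add: xi_coeff_nonneg)
    then show ?thesis by (simp add: mult.assoc)
  qed (simp add: xi_coeff_def)
  then show ?thesis
    using sums_le[OF _ xi1_sums xi2_sums] by blast
qed

text \<open>The left-hand side is the variance of \<open>p\<close> under the probability weights \<open>xi_coeff \<gamma>\<close>;
  it vanishes only for a point mass, i.e. for a pure \<open>xi\<close>.\<close>

lemma xi_variance_pos:
  assumes norm: "xi \<gamma> 1 = 1" and mixture: "\<not> (\<exists>p::nat. \<forall>x. xi \<gamma> x = x ^ p)"
  shows "xi2 \<gamma> + xi1 \<gamma> - (xi1 \<gamma>)\<^sup>2 > 0"
proof -
  let ?w = "xi_coeff \<gamma>"
  have "(\<lambda>p. (real p - 1) * real p * ?w p + real p * ?w p) sums (xi2 \<gamma> + xi1 \<gamma>)"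
    by (rule sums_add[OF xi2_sums xi1_sums])
  then have "(\<lambda>p. (real p)\<^sup>2 * ?w p) sums (xi2 \<gamma> + xi1 \<gamma>)"
    by (simp add: power2_eq_square algebra_simps)
  then have variance: "(\<lambda>p. (real p - xi1 \<gamma>)\<^sup>2 * ?w p) sums (xi2 \<gamma> + xi1 \<gamma> - (xi1 \<gamma>)\<^sup>2)"
    by (rule variance_sums[OF xi_coeff_sums[OF norm] xi1_sums])
  have "0 \<le> xi2 \<gamma> + xi1 \<gamma> - (xi1 \<gamma>)\<^sup>2"
    by (rule sums_le[OF _ sums_zero variance]) (simp add: xi_coeff_nonneg)
  moreover have "xi2 \<gamma> + xi1 \<gamma> - (xi1 \<gamma>)\<^sup>2 \<noteq> 0"
  proof
    assume "xi2 \<gamma> + xi1 \<gamma> - (xi1 \<gamma>)\<^sup>2 = 0"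
    with variance obtain n where n: "?w = (\<lambda>p. if p = n then 1 else 0)"
      using point_mass_if_variance_zero[OF xi_coeff_nonneg xi_coeff_sums[OF norm]] by metis
    have "(\<lambda>p. ?w p * x ^ p) = (\<lambda>p. if p = n then x ^ p else 0)" for x :: real
      by (simp add: n fun_eq_iff)
    then have "xi \<gamma> x = x ^ n" for x
      using sums_single[of n "\<lambda>p. x ^ p"] by (simp add: xi_eq_powser sums_iff)
    with mixture show False by blast
  qed
  ultimately show ?thesis by linarith
qed

end

section \<open>The convex part of \<open>Psi_star\<close>\<close>

definition psi_tail :: "real \<Rightarrow> real" where
  "psi_tail r = r * sqrt (r\<^sup>2 - 4) / 4 - ln ((r + sqrt (r\<^sup>2 - 4)) / 2)"

lemma psi_tail_deriv:
  assumes r: "2 < r"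
  shows "DERIV psi_tail r :> sqrt (r\<^sup>2 - 4) / 2"
proof -
  define s where "s = sqrt (r\<^sup>2 - 4)"
  have "2\<^sup>2 < r\<^sup>2" using r by (intro power_strict_mono) auto
  then have r2: "4 < r\<^sup>2" by simp
  then have s: "0 < s" and rs: "r * r = s * s + 4"
    by (simp_all add: s_def flip: power2_eq_square)
  have "DERIV psi_tail r :>
      (s * 4 + inverse s * r * r * 4) / 16 - (4 + 4 * (inverse s * r)) / (r * 4 + s * 4)"
    unfolding psi_tail_def[abs_def] using s r r2
    by (auto intro!: derivative_eq_intros simp: s_def[symmetric])
  moreover have "4 + 4 * (inverse s * r) = inverse s * (r * 4 + s * 4)"
    using s by (simp add: field_simps)
  moreover have "s * 4 + inverse s * r * r * 4 = 8 * s + 16 * inverse s"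
    using s by (simp add: mult.assoc rs distrib_left)
  ultimately have "DERIV psi_tail r :> (8 * s + 16 * inverse s) / 16 - inverse s"
    using s r by simp
  then have "DERIV psi_tail r :> s / 2"
    by (rule DERIV_cong) (simp add: field_simps)
  then show ?thesis by (simp only: s_def)
qed

lemma psi_tail_2 [simp]: "psi_tail 2 = 0"
  by (simp add: psi_tail_def)

lemma continuous_on_psi_tail: "continuous_on {2..} psi_tail"
proof -
  have pos: "0 < r + sqrt (r\<^sup>2 - 4)" if "2 \<le> r" for r :: real
  proof -
    have "2\<^sup>2 \<le> r\<^sup>2" using that by (intro power_mono) auto
    with that show ?thesis by (simp add: add_pos_nonneg)
  qed
  show ?thesis
    unfolding psi_tail_def by (intro continuous_intros) (auto dest!: pos)
qed

definition psi_corr :: "real \<Rightarrow> real" where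
  "psi_corr t = t\<^sup>2 / 4 - 1 / 2 - Psi_star t"

lemma psi_corr_eq_psi_tail: "psi_corr t = psi_tail (max \<bar>t\<bar> 2)"
proof (cases "\<bar>t\<bar> \<le> 2")
  case False
  have "sqrt (t\<^sup>2 / 4 - 1) = sqrt ((t\<^sup>2 - 4) / 4)"
    by (simp add: field_simps)
  also have "\<dots> = sqrt (t\<^sup>2 - 4) / 2"
    by (simp add: real_sqrt_divide)
  finally have sqrt_eq: "sqrt (t\<^sup>2 / 4 - 1) = sqrt (t\<^sup>2 - 4) / 2" .
  show ?thesis
    using False by (simp add: psi_corr_def Psi_star_def psi_tail_def sqrt_eq add_divide_distrib add.commute)
qed (simp add: psi_corr_def Psi_star_def max_def)

lemma psi_corr_minus: "psi_corr (- t) = psi_corr t"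
  by (simp add: psi_corr_eq_psi_tail)

lemma psi_corr_0 [simp]: "psi_corr 0 = 0"
  by (simp add: psi_corr_eq_psi_tail)

text \<open>This is \<open>sgn t * sqrt (t\<^sup>2 - 4) / 2\<close> for \<open>\<bar>t\<bar> > 2\<close> and \<open>0\<close> otherwise, written so
  that continuity is immediate.\<close>

definition psi_corr_deriv :: "real \<Rightarrow> real" where
  "psi_corr_deriv t = (sqrt (max (t - 2) 0 * (t + 2)) - sqrt (max (- t - 2) 0 * (- t + 2))) / 2"

lemma psi_corr_deriv_gt_2:
  assumes "2 < t"
  shows "psi_corr_deriv t = sqrt (t\<^sup>2 - 4) / 2"
proof -
  have "max (t - 2) 0 * (t + 2) = t\<^sup>2 - 4" and "max (- t - 2) 0 = 0"
    using assms by (simp_all add: power2_eq_square algebra_simps)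
  then show ?thesis by (simp add: psi_corr_deriv_def)
qed

lemma psi_corr_deriv_eq_0: "\<bar>t\<bar> \<le> 2 \<Longrightarrow> psi_corr_deriv t = 0"
  by (simp add: psi_corr_deriv_def)

lemma psi_corr_deriv_minus: "psi_corr_deriv (- t) = - psi_corr_deriv t"
  by (simp add: psi_corr_deriv_def diff_divide_distrib)

lemma isCont_psi_corr_deriv [continuous_intros]:
  "isCont f x \<Longrightarrow> isCont (\<lambda>x. psi_corr_deriv (f x)) x"
  unfolding psi_corr_deriv_def by (intro continuous_intros) auto

lemma mono_psi_corr_deriv: "mono psi_corr_deriv"
proof -
  define ramp where "ramp t = sqrt (max (t - 2) 0 * (t + 2))" for t :: real
  have "mono ramp"
  proof
    fix s t :: real
    assume "s \<le> t"
    have "max (s - 2) 0 * (s + 2) \<le> max (t - 2) 0 * (t + 2)"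
    proof (cases "2 < s")
      case True
      with \<open>s \<le> t\<close> show ?thesis by (simp add: mult_mono)
    qed (simp add: max_def)
    then show "ramp s \<le> ramp t"
      by (simp add: ramp_def)
  qed
  have ramp_split: "psi_corr_deriv t = (ramp t - ramp (- t)) / 2" for t
    by (simp add: psi_corr_deriv_def ramp_def)
  show ?thesis
  proof
    fix s t :: real
    assume "s \<le> t"
    then have "ramp s \<le> ramp t" and "ramp (- t) \<le> ramp (- s)"
      using \<open>mono ramp\<close> by (simp_all add: monoD)
    then show "psi_corr_deriv s \<le> psi_corr_deriv t"
      unfolding ramp_split by simp
  qed
qed

lemma psi_corr_deriv_0 [simp]: "psi_corr_deriv 0 = 0"
  by (simp add: psi_corr_deriv_eq_0)

lemma DERIV_psi_corr_2: "DERIV psi_corr 2 :> 0"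
proof -
  have bound: "\<bar>(psi_corr (2 + h) - psi_corr 2) / h\<bar> \<le> psi_corr_deriv (2 + \<bar>h\<bar>)"
    if "h \<noteq> 0" "\<bar>h\<bar> < 4" for h
  proof (cases "0 < h")
    case True
    have "continuous_on {2..2 + h} psi_tail"
      using continuous_on_psi_tail by (rule continuous_on_subset) auto
    moreover have deriv: "DERIV psi_tail x :> psi_corr_deriv x" if "2 < x" for x
      using psi_tail_deriv[OF that] by (simp add: psi_corr_deriv_gt_2[OF that])
    ultimately obtain l z where z: "2 < z" "z < 2 + h" and l: "DERIV psi_tail z :> l"
      and mvt: "psi_tail (2 + h) - psi_tail 2 = (2 + h - 2) * l"
      using MVT[of 2 "2 + h" psi_tail] True real_differentiable_def by fastforce
    have "l = psi_corr_deriv z"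
      using DERIV_unique[OF l deriv[OF z(1)]] .
    have "(psi_corr (2 + h) - psi_corr 2) / h = psi_corr_deriv z"
      using True mvt \<open>l = psi_corr_deriv z\<close> by (simp add: psi_corr_eq_psi_tail)
    moreover have "0 \<le> psi_corr_deriv z" "psi_corr_deriv z \<le> psi_corr_deriv (2 + h)"
      using z mono_psi_corr_deriv[THEN monoD, of 0 z] mono_psi_corr_deriv[THEN monoD, of z "2 + h"]
      by simp_all
    ultimately show ?thesis using True by simp
  next
    case False
    then have "psi_corr (2 + h) = 0"
      using that by (simp add: psi_corr_eq_psi_tail max_def)
    moreover have "0 \<le> psi_corr_deriv (2 + \<bar>h\<bar>)"
      using mono_psi_corr_deriv[THEN monoD, of 0 "2 + \<bar>h\<bar>"] by simp
    ultimately show ?thesis by (simp add: psi_corr_eq_psi_tail)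
  qed
  have "eventually (\<lambda>h. h \<noteq> 0 \<and> \<bar>h\<bar> < 4) (at (0::real))"
    by (auto simp: eventually_at intro!: exI[of _ 4])
  then have "eventually (\<lambda>h. norm ((psi_corr (2 + h) - psi_corr 2) / h) \<le> psi_corr_deriv (2 + \<bar>h\<bar>)) (at 0)"
    by eventually_elim (metis bound real_norm_def)
  moreover have "isCont (\<lambda>h. psi_corr_deriv (2 + \<bar>h\<bar>)) 0"
    by (intro continuous_intros)
  then have "(\<lambda>h. psi_corr_deriv (2 + \<bar>h\<bar>)) \<midarrow>0\<rightarrow> 0"
    using isCont_def psi_corr_deriv_eq_0[of 2] by fastforce
  ultimately show ?thesis
    unfolding DERIV_def by (rule Lim_null_comparison)
qed

lemma DERIV_psi_corr: "DERIV psi_corr t :> psi_corr_deriv t"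
proof -
  have nonneg: "DERIV psi_corr t :> psi_corr_deriv t" if "0 \<le> t" for t
  proof -
    consider "t < 2" | "t = 2" | "2 < t" by linarith
    then show ?thesis
    proof cases
      case 1
      have zero: "DERIV (\<lambda>_. 0) t :> psi_corr_deriv t"
        using 1 that by (simp add: psi_corr_deriv_eq_0)
      have "psi_corr x = 0" if "x \<in> {-2<..<2}" for x
        using that by (simp add: psi_corr_eq_psi_tail max_def abs_le_iff)
      then show ?thesis
        by (intro has_field_derivative_transform_within_open[OF zero, of "{-2<..<2}"])
          (use 1 that in auto)
    next
      case 2
      then show ?thesis using DERIV_psi_corr_2 by (simp add: psi_corr_deriv_eq_0)
    next
      case 3
      have tail: "DERIV psi_tail t :> psi_corr_deriv t"
        using psi_tail_deriv[OF 3] by (simp add: psi_corr_deriv_gt_2[OF 3])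
      have "psi_corr x = psi_tail x" if "x \<in> {2<..}" for x
        using that by (simp add: psi_corr_eq_psi_tail)
      then show ?thesis
        by (intro has_field_derivative_transform_within_open[OF tail, of "{2<..}"])
          (use 3 in auto)
    qed
  qed
  show ?thesis
  proof (cases "0 \<le> t")
    case False
    then have "DERIV psi_corr (- t) :> - psi_corr_deriv t"
      using nonneg[of "- t"] by (simp add: psi_corr_deriv_minus)
    then have "DERIV (\<lambda>x. psi_corr (- x)) t :> - (- psi_corr_deriv t)"
      by (rule DERIV_mirror[THEN iffD1])
    then show ?thesis
      by (simp add: psi_corr_minus)
  qed (rule nonneg)
qed

lemma psi_corr_above_tangent: "psi_corr s + psi_corr_deriv s * (t - s) \<le> psi_corr t"
  by (rule mono_deriv_imp_above_tangent[OF DERIV_psi_corr mono_psi_corr_deriv])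

lemma isCont_psi_corr [continuous_intros]: "isCont f x \<Longrightarrow> isCont (\<lambda>x. psi_corr (f x)) x"
  using DERIV_isCont[OF DERIV_psi_corr] isCont_o2 by blast

section \<open>Strong concavity of \<open>F\<close> in \<open>y\<close>\<close>

definition F_ab :: "real \<Rightarrow> real \<Rightarrow> real \<Rightarrow> real \<Rightarrow> real" where
  "F_ab a b x y = 1/2 + 1/2 * ln (b / a) - x\<^sup>2 / 2 - (y - a * x)\<^sup>2 / (2 * (b + a - a\<^sup>2))
     + Psi_star (y / sqrt b)"

lemma Fxi_eq_F_ab: "Fxi \<gamma> = F_ab (xi1 \<gamma>) (xi2 \<gamma>)"
  by (simp add: fun_eq_iff Fxi_def F_ab_def)

lemma quadratic_form_complete_square:
  fixes a b c x y :: real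
  assumes c: "0 < c" and b: "0 < b" and ab: "a + b = c + a\<^sup>2"
  shows "- x\<^sup>2 / 2 - (y - a * x)\<^sup>2 / (2 * c) + y\<^sup>2 / (4 * b)
      = - ((b - a) / (4 * b * (a + b))) * y\<^sup>2 - (a * y - (a + b) * x)\<^sup>2 / (2 * c * (a + b))"
proof -
  define d where "d = a + b"
  have d: "0 < d" using c ab unfolding d_def by (simp add: add_pos_nonneg)
  have "(- x\<^sup>2 / 2 - (y - a * x)\<^sup>2 / (2 * c)) * (2 * c * d) = - c * y\<^sup>2 - (a * y - d * x)\<^sup>2"
    using c unfolding d_def ab by (simp add: field_simps power2_eq_square)
  then have "- x\<^sup>2 / 2 - (y - a * x)\<^sup>2 / (2 * c) = - y\<^sup>2 / (2 * d) - (a * y - d * x)\<^sup>2 / (2 * c * d)"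
    using c d by (simp add: field_simps)
  moreover have "- y\<^sup>2 / (2 * d) + y\<^sup>2 / (4 * b) = - ((2 * b - d) / (4 * b * d)) * y\<^sup>2"
    using b d by (simp add: field_simps)
  moreover have "2 * b - d = b - a"
    by (simp add: d_def)
  ultimately show ?thesis
    unfolding d_def[symmetric] by simp
qed

locale F_ab_params =
  fixes a b :: real
  assumes a_pos: "0 < a" and a_less_b: "a < b" and variance_pos: "0 < b + a - a\<^sup>2"
begin

definition c :: real where "c = b + a - a\<^sup>2"

definition k :: real where "k = (b - a) / (4 * b * (a + b))"

definition quad :: "real \<Rightarrow> real \<Rightarrow> real" where
  "quad x y = - x\<^sup>2 / 2 - (y - a * x)\<^sup>2 / (2 * c) + y\<^sup>2 / (4 * b)"

definition quad_dx :: "real \<Rightarrow> real \<Rightarrow> real" where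
  "quad_dx x y = - x + a * (y - a * x) / c"

definition quad_dy :: "real \<Rightarrow> real \<Rightarrow> real" where
  "quad_dy x y = - (y - a * x) / c + y / (2 * b)"

lemma b_pos: "0 < b"
  using a_pos a_less_b by simp

lemma c_pos: "0 < c"
  using variance_pos by (simp add: c_def)

lemma k_pos: "0 < k"
  using a_pos a_less_b by (simp add: k_def)

lemma F_ab_eq: "F_ab a b x y = ln (b / a) / 2 + quad x y - psi_corr (y / sqrt b)"
  using b_pos by (simp add: F_ab_def quad_def psi_corr_def c_def power_divide)

lemma quad_expand:
  "quad x y = quad x0 y0 + quad_dx x0 y0 * (x - x0) + quad_dy x0 y0 * (y - y0) + quad (x - x0) (y - y0)"
  using c_pos b_pos by (simp add: quad_def quad_dx_def quad_dy_def field_simps power2_eq_square)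

lemma quad_eq: "quad x y = - k * y\<^sup>2 - (a * y - (a + b) * x)\<^sup>2 / (2 * c * (a + b))"
  unfolding quad_def k_def using c_pos b_pos by (rule quadratic_form_complete_square) (simp add: c_def)

lemma quad_le: "quad x y \<le> - k * y\<^sup>2"
  using c_pos a_pos b_pos by (simp add: quad_eq)

lemma F_ab_le_tangent:
  "F_ab a b x y \<le> F_ab a b x0 y0 + quad_dx x0 y0 * (x - x0)
     + (quad_dy x0 y0 - psi_corr_deriv (y0 / sqrt b) / sqrt b) * (y - y0) - k * (y - y0)\<^sup>2"
proof -
  have "psi_corr (y0 / sqrt b) + psi_corr_deriv (y0 / sqrt b) * (y / sqrt b - y0 / sqrt b)
      \<le> psi_corr (y / sqrt b)"
    by (rule psi_corr_above_tangent)
  moreover have "y / sqrt b - y0 / sqrt b = (y - y0) / sqrt b"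
    by (simp add: diff_divide_distrib)
  ultimately show ?thesis
    using quad_le[of "x - x0" "y - y0"]
    by (simp add: F_ab_eq quad_expand[of x y x0 y0] algebra_simps)
qed

text \<open>\<open>(ridge y, y)\<close> is the point at height \<open>y\<close> where \<open>\<partial>F_ab / \<partial>y\<close> vanishes.\<close>

definition ridge :: "real \<Rightarrow> real" where
  "ridge y = (y * (1 - c / (2 * b)) + c * psi_corr_deriv (y / sqrt b) / sqrt b) / a"

lemma quad_dy_ridge: "quad_dy (ridge y) y = psi_corr_deriv (y / sqrt b) / sqrt b"
  using a_pos b_pos c_pos by (simp add: quad_dy_def ridge_def field_simps)

lemma F_ab_le_ridge:
  "F_ab a b x y \<le> F_ab a b (ridge y0) y0 + quad_dx (ridge y0) y0 * (x - ridge y0) - k * (y - y0)\<^sup>2"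
  using F_ab_le_tangent[of x y "ridge y0" y0] by (simp add: quad_dy_ridge)

lemma ridge_0 [simp]: "ridge 0 = 0"
  by (simp add: ridge_def)

lemma F_ab_0_0: "F_ab a b 0 0 = ln (b / a) / 2"
  by (simp add: F_ab_eq quad_def)

lemma F_ab_le_origin: "F_ab a b x y \<le> ln (b / a) / 2 - k * y\<^sup>2"
  using F_ab_le_ridge[of x y 0] by (simp add: F_ab_0_0 quad_dx_def)

lemma ridge_neg:
  assumes "y < 0"
  shows "ridge y < 0"
proof -
  have "0 < a\<^sup>2"
    using a_pos by simp
  then have "c < 2 * b"
    using a_less_b unfolding c_def by linarith
  then have "y * (1 - c / (2 * b)) < 0"
    using assms b_pos by (simp add: mult_neg_pos)
  moreover have "psi_corr_deriv (y / sqrt b) \<le> psi_corr_deriv 0"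
    using assms b_pos by (intro monoD[OF mono_psi_corr_deriv]) (simp add: divide_nonpos_pos)
  then have "c * psi_corr_deriv (y / sqrt b) / sqrt b \<le> 0"
    using c_pos b_pos by (simp add: mult_nonneg_nonpos divide_nonpos_pos)
  ultimately show ?thesis
    using a_pos by (simp add: ridge_def divide_neg_pos)
qed

lemma isCont_F_ab_ridge: "isCont (\<lambda>y. F_ab a b (ridge y) y) y"
  unfolding F_ab_eq[abs_def] quad_def ridge_def
  using a_pos b_pos c_pos by (intro continuous_intros) auto

lemma exists_zero_with_quadratic_cap:
  "\<exists>x0 y0 g. 0 < g \<and> F_ab a b x0 y0 = 0 \<and> (\<forall>x y. F_ab a b x y \<le> g * (x - x0) - k * (y - y0)\<^sup>2)"
proof -
  define L where "L = ln (b / a) / 2"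
  have L: "0 < L"
    using a_pos a_less_b by (simp add: L_def)
  define Y where "Y = - (1 + L / k)"
  have "k + L \<le> k * (1 + L / k)\<^sup>2"
    using L k_pos by (simp add: power2_eq_square field_simps)
  then have "k + L \<le> k * Y\<^sup>2"
    by (simp only: Y_def power2_minus)
  moreover have "F_ab a b (ridge Y) Y \<le> L - k * Y\<^sup>2"
    unfolding L_def by (rule F_ab_le_origin)
  ultimately have "F_ab a b (ridge Y) Y < 0"
    using k_pos by linarith
  moreover have "0 < L / k"
    using L k_pos by simp
  then have "Y \<le> 0"
    unfolding Y_def by linarith
  moreover have "0 \<le> F_ab a b (ridge 0) 0"
    using L by (simp add: F_ab_0_0 L_def)
  ultimately have "\<exists>y0. Y \<le> y0 \<and> y0 \<le> 0 \<and> F_ab a b (ridge y0) y0 = 0"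
    using isCont_F_ab_ridge by (intro IVT[of "\<lambda>y. F_ab a b (ridge y) y"]) simp_all
  then obtain y0 where "y0 \<le> 0" and F0: "F_ab a b (ridge y0) y0 = 0"
    by blast
  then have "y0 < 0"
    using F_ab_0_0 L by (cases "y0 = 0") (simp_all add: L_def)
  define x0 where "x0 = ridge y0"
  define g where "g = quad_dx x0 y0"
  have cap: "F_ab a b x y \<le> g * (x - x0) - k * (y - y0)\<^sup>2" for x y
    using F_ab_le_ridge[of x y y0] F0 by (simp add: x0_def g_def)
  have "L \<le> - (g * x0) - k * y0\<^sup>2"
    using cap[of 0 0] F_ab_0_0 by (simp add: L_def)
  moreover have "0 \<le> k * y0\<^sup>2"
    using k_pos by simp
  ultimately have "g * x0 < 0"
    using L by linarith
  moreover have "x0 < 0"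
    using ridge_neg[OF \<open>y0 < 0\<close>] by (simp add: x0_def)
  ultimately have "0 < g"
    by (simp add: mult_less_0_iff)
  then show ?thesis
    using F0 cap unfolding x0_def by blast
qed

end

section \<open>Localization at a zero below a quadratic cap\<close>

locale quadratic_cap =
  fixes F :: "real \<Rightarrow> real \<Rightarrow> real" and x0 y0 g k :: real
  assumes g_pos: "0 < g" and k_pos: "0 < k" and F_zero: "F x0 y0 = 0"
    and F_le_cap: "\<And>x y. F x y \<le> g * (x - x0) - k * (y - y0)\<^sup>2"
begin

lemma F_le_slope: "F x y \<le> g * (x - x0)"
proof -
  have "0 \<le> k * (y - y0)\<^sup>2"
    using k_pos by simp
  then show ?thesis
    using F_le_cap[of x y] by linarith
qed

lemma Sup_F_x0: "(SUP y. F x0 y) = 0"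
proof (rule cSup_eq_maximum)
  show "0 \<in> range (F x0)"
    using F_zero by (metis rangeI)
qed (use F_le_slope[of x0] in auto)

lemma Least_Sup_eq_0: "(LEAST x. (SUP y. F x y) = 0) = x0"
proof (rule Least_equality)
  show "(SUP y. F x0 y) = 0"
    by (rule Sup_F_x0)
next
  fix x
  assume Sup: "(SUP y. F x y) = 0"
  show "x0 \<le> x"
  proof (rule ccontr)
    assume "\<not> x0 \<le> x"
    then have "g * (x - x0) < 0"
      using g_pos by (simp add: mult_pos_neg)
    moreover have "(SUP y. F x y) \<le> g * (x - x0)"
      by (rule cSUP_least) (simp_all add: F_le_slope)
    ultimately show False
      using Sup by simp
  qed
qed

lemma The_argmax_eq: "(THE y. \<forall>z. F x0 z \<le> F x0 y) = y0"
proof (rule the_equality)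
  show "\<forall>z. F x0 z \<le> F x0 y0"
    using F_le_slope[of x0] F_zero by simp
next
  fix y
  assume "\<forall>z. F x0 z \<le> F x0 y"
  then have "0 \<le> F x0 y"
    using F_zero by metis
  then have "k * (y - y0)\<^sup>2 \<le> 0"
    using F_le_cap[of x0 y] by simp
  then show "y = y0"
    using k_pos by (simp add: mult_le_0_iff)
qed

lemma localization:
  "\<exists>\<alpha>>0. \<exists>\<beta>>0. \<exists>\<epsilon>0>0. \<forall>\<epsilon>. 0 < \<epsilon> \<and> \<epsilon> < \<epsilon>0 \<longrightarrow>
     (\<forall>x y. \<bar>x - x0\<bar> < \<epsilon> \<and> \<bar>y - y0\<bar> \<ge> \<alpha> * sqrt \<epsilon> \<longrightarrow> F x y < 0) \<and>
     (\<forall>x y. \<bar>x - x0\<bar> < \<epsilon> \<and> \<bar>y - y0\<bar> < \<alpha> * sqrt \<epsilon> \<longrightarrow> F x y < \<beta> * sqrt \<epsilon>)"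
proof -
  define \<alpha> where "\<alpha> = sqrt ((g + 1) / k)"
  have \<alpha>: "0 < \<alpha>" "\<alpha>\<^sup>2 = (g + 1) / k"
    using g_pos k_pos by (simp_all add: \<alpha>_def)
  have slope: "g * (x - x0) < g * \<epsilon>" if "\<bar>x - x0\<bar> < \<epsilon>" for x \<epsilon>
    using that g_pos by (intro mult_strict_left_mono) auto
  have outside: "F x y < 0"
    if "0 < \<epsilon>" "\<bar>x - x0\<bar> < \<epsilon>" "\<alpha> * sqrt \<epsilon> \<le> \<bar>y - y0\<bar>" for \<epsilon> x y
  proof -
    have "(\<alpha> * sqrt \<epsilon>)\<^sup>2 \<le> \<bar>y - y0\<bar>\<^sup>2"
      using that \<alpha> by (intro power_mono) auto
    then have "(g + 1) / k * \<epsilon> \<le> (y - y0)\<^sup>2"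
      using that \<alpha> by (simp add: power_mult_distrib)
    then have "(g + 1) * \<epsilon> \<le> k * (y - y0)\<^sup>2"
      using k_pos by (simp add: field_simps)
    then show ?thesis
      using F_le_cap[of x y] slope[OF that(2)] that(1) by (simp add: algebra_simps)
  qed
  have inside: "F x y < (g + 1) * sqrt \<epsilon>"
    if "0 < \<epsilon>" "\<epsilon> < 1" "\<bar>x - x0\<bar> < \<epsilon>" for \<epsilon> x y
  proof -
    have "\<epsilon> = sqrt \<epsilon> * sqrt \<epsilon>"
      using that by simp
    also have "\<dots> \<le> sqrt \<epsilon> * 1"
      using that by (intro mult_left_mono) auto
    finally have "g * \<epsilon> \<le> g * sqrt \<epsilon>"
      using g_pos by simp
    moreover have "0 < sqrt \<epsilon>"
      using that by simp
    moreover have "(g + 1) * sqrt \<epsilon> = g * sqrt \<epsilon> + sqrt \<epsilon>"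
      by (simp add: algebra_simps)
    ultimately show ?thesis
      using F_le_slope[of x y] slope[OF that(3)] by linarith
  qed
  show ?thesis
    using \<alpha> g_pos outside inside
    by (intro exI[of _ \<alpha>] conjI exI[of _ "g + 1"] exI[of _ "1::real"]) (auto simp: not_le)
qed

end

theorem lemma3p2:
  fixes \<gamma> :: "nat \<Rightarrow> real"
  assumes summ: "summable (\<lambda>p. (if 2 \<le> p then 2 ^ p * (\<gamma> p)\<^sup>2 else 0))"
    and norm: "xi \<gamma> 1 = 1"
    and mixture: "\<not> (\<exists>p::nat. \<forall>x. xi \<gamma> x = x ^ p)"
    and pure: "pure_like \<gamma>"
  shows "\<exists>\<alpha>>0. \<exists>\<beta>>0. \<exists>\<epsilon>0>0. \<forall>\<epsilon>. 0 < \<epsilon> \<and> \<epsilon> < \<epsilon>0 \<longrightarrow>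
           (\<forall>x y. \<bar>x - mE0 \<gamma>\<bar> < \<epsilon> \<and> \<bar>y - my0 \<gamma>\<bar> \<ge> \<alpha> * sqrt \<epsilon>
                   \<longrightarrow> Fxi \<gamma> x y < 0) \<and>
           (\<forall>x y. \<bar>x - mE0 \<gamma>\<bar> < \<epsilon> \<and> \<bar>y - my0 \<gamma>\<bar> < \<alpha> * sqrt \<epsilon>
                   \<longrightarrow> Fxi \<gamma> x y < \<beta> * sqrt \<epsilon>)"
proof -
  have "xi1 \<gamma> \<noteq> xi2 \<gamma>"
    using pure xi1_ge_2[OF summ norm] by (auto simp: pure_like_def)
  then interpret P: F_ab_params "xi1 \<gamma>" "xi2 \<gamma>"
    using xi1_ge_2[OF summ norm] xi1_le_xi2[OF summ] xi_variance_pos[OF summ norm mixture]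
    by unfold_locales auto
  obtain x0 y0 g where "0 < g" "Fxi \<gamma> x0 y0 = 0"
    and "\<And>x y. Fxi \<gamma> x y \<le> g * (x - x0) - P.k * (y - y0)\<^sup>2"
    using P.exists_zero_with_quadratic_cap unfolding Fxi_eq_F_ab by blast
  then interpret cap: quadratic_cap "Fxi \<gamma>" x0 y0 g P.k
    using P.k_pos by unfold_locales auto
  have "mE0 \<gamma> = x0" "my0 \<gamma> = y0"
    unfolding mE0_def my0_def by (simp_all only: cap.Least_Sup_eq_0 cap.The_argmax_eq)
  then show ?thesis
    using cap.localization by simp
qed

end
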